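(* Let $p,q\geq 2$ be relatively prime integers, let $t>0$ and $k\geq 2t+1$ be integers, and let $w_1,w_2\in A_{pq}^k$. Then (1) if $\mathrm{int}(w_1)<q^{2t}$ then $\mathrm{int}(F_{p,q}^t(w_1))=0$; and (2) if $\mathrm{int}(w_2)\equiv\mathrm{int}(w_1)+q^{2t}\pmod{(pq)^k}$ then $\mathrm{int}(F_{p,q}^t(w_2))\equiv\mathrm{int}(F_{p,q}^t(w_1))+1\pmod{(pq)^{k-2t}}$.
   Context: For an integer $n>1$, $A_n=\{0,\dots,n-1\}$, and $A_n^k$ is the set of words of length $k$. Define $g_{p,q}:A_{pq}\times A_{pq}\to A_{pq}$ by writing $x=x_1q+x_0$, $y=y_1q+y_0$ with $x_0,y_0\in A_q$, $x_1,y_1\in A_p$ (uniquely), and $g_{p,q}(x,y)=x_0p+y_1$, and $f_{p,q}(x,a,y)=g_{p,q}(g_{p,q}(x,a),g_{p,q}(a,y))$. For a word $w=w(1)\cdots w(m)$ with $m\geq3$, $F_{p,q}(w)=u(1)\cdots u(m-2)$ with $u(i)=f_{p,q}(w(i),w(i+1),w(i+2))$, and for $m\geq 2t+1$, $F_{p,q}^t(w)=F_{p,q}(F_{p,q}^{t-1}(w))$, a word of length $m-2t$. For a nonempty word $w=w(1)\cdots w(m)$ over $A_{pq}$, $\mathrm{int}(w)=\sum_{i=0}^{m-1}w(m-i)(pq)^i$. *)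

theory Defs
  imports Main
begin

text \<open>Letters of A_n are naturals below n; words are lists of naturals.\<close>

definition g :: "nat \<Rightarrow> nat \<Rightarrow> nat \<Rightarrow> nat \<Rightarrow> nat" where
  "g p q x y = (x mod q) * p + y div q"

definition f :: "nat \<Rightarrow> nat \<Rightarrow> nat \<Rightarrow> nat \<Rightarrow> nat \<Rightarrow> nat" where
  "f p q x a y = g p q (g p q x a) (g p q a y)"

definition F :: "nat \<Rightarrow> nat \<Rightarrow> nat list \<Rightarrow> nat list" where
  "F p q w = map (\<lambda>i. f p q (w ! i) (w ! (i + 1)) (w ! (i + 2))) [0..<length w - 2]"

definition Fpow :: "nat \<Rightarrow> nat \<Rightarrow> nat \<Rightarrow> nat list \<Rightarrow> nat list" where
  "Fpow p q t = (F p q ^^ t)"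

text \<open>int(w) = sum_{i=0}^{m-1} w(m-i) (pq)^i, i.e. base-pq value, most significant first.\<close>
definition wint :: "nat \<Rightarrow> nat \<Rightarrow> nat list \<Rightarrow> nat" where
  "wint p q w = (\<Sum>i<length w. w ! (length w - 1 - i) * (p * q) ^ i)"

end

theory Submission
  imports Defs
begin

text \<open>Write b = pq. The letter g(x, y), with y < b, is the base-b digit of (xb + y) div q, so f reads
  off one base-b digit of N div q^2 from three consecutive digits of N. Consequently F sends the word
  of N to the word of N div q^2 (dropping the two leading digits), and F^t sends it to the word of
  N div q^(2t) modulo b^(k - 2t). Both claims follow at once: N < q^(2t) gives quotient 0, and adding
  q^(2t) adds 1 to the quotient.\<close>

lemma mod_div_mod_eq:
  fixes x c e n :: nat
  assumes "0 < c" "c * e dvd n"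
  shows "x mod n div c mod e = x div c mod e"
proof -
  from assms(2) obtain r where "n = c * e * r"
    by (rule dvdE)
  then have n: "n = c * (e * r)"
    by (simp add: mult.assoc)
  have "x mod n div c = x div c mod (e * r)"
    unfolding n mod_mult2_eq using assms(1) by simp
  then show ?thesis
    by (simp add: mod_mod_cancel)
qed

lemma power_mult_power_diff_dvd:
  fixes p q j l :: nat
  assumes "j \<le> l"
  shows "q ^ j * (p * q) ^ (l - j) dvd (p * q) ^ l"
proof -
  have "(p * q) ^ l = (p * q) ^ j * (p * q) ^ (l - j)"
    using assms by (simp flip: power_add)
  then show ?thesis
    by (simp add: power_mult_distrib mult.assoc)
qed

lemma digit_sum_div_power_mod:
  fixes b :: nat
  assumes "\<forall>j<n. d j < b" "i < n"
  shows "(\<Sum>j<n. d j * b ^ j) div b ^ i mod b = d i"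
  using assms
proof (induction n arbitrary: d i)
  case 0
  then show ?case by simp
next
  case (Suc n)
  have split: "(\<Sum>j<Suc n. d j * b ^ j) = d 0 + b * (\<Sum>j<n. d (Suc j) * b ^ j)"
    by (subst sum.lessThan_Suc_shift)
      (simp add: sum_distrib_left mult.assoc mult.left_commute del: sum.lessThan_Suc)
  have "d 0 < b"
    using Suc.prems by auto
  show ?case
  proof (cases i)
    case 0
    with split \<open>d 0 < b\<close> show ?thesis by simp
  next
    case (Suc i')
    have "(d 0 + b * (\<Sum>j<n. d (Suc j) * b ^ j)) div b ^ i
        = (\<Sum>j<n. d (Suc j) * b ^ j) div b ^ i'"
      using Suc \<open>d 0 < b\<close> by (simp add: div_mult2_eq)
    with split Suc.IH[of "\<lambda>j. d (Suc j)" i'] Suc.prems Suc show ?thesis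
      by auto
  qed
qed

lemma digit_sum_less_power:
  fixes b :: nat
  assumes "\<forall>j<n. d j < b"
  shows "(\<Sum>j<n. d j * b ^ j) < b ^ n"
  using assms
proof (induction n)
  case 0
  then show ?case by simp
next
  case (Suc n)
  have "d n * b ^ n \<le> (b - 1) * b ^ n"
    using Suc.prems by auto
  moreover have "(\<Sum>j<n. d j * b ^ j) < b ^ n"
    using Suc by auto
  ultimately have "(\<Sum>j<n. d j * b ^ j) + d n * b ^ n < b ^ n + (b - 1) * b ^ n"
    by linarith
  also have "\<dots> = b ^ Suc n"
    using Suc.prems by (cases b) auto
  finally show ?case
    by simp

qed

lemma mod_power_eq_digit_sum:
  fixes b x :: nat
  shows "x mod b ^ n = (\<Sum>i<n. x div b ^ i mod b * b ^ i)"
proof (induction n)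
  case 0
  then show ?case by simp
next
  case (Suc n)
  have "x mod b ^ Suc n = x mod (b ^ n * b)"
    by (simp add: mult.commute)
  also have "\<dots> = b ^ n * (x div b ^ n mod b) + x mod b ^ n"
    by (rule mod_mult2_eq)
  finally have "x mod b ^ Suc n = b ^ n * (x div b ^ n mod b) + x mod b ^ n" .
  with Suc show ?case
    by (simp add: mult.commute)
qed

lemma wint_div_power_mod:
  assumes "set w \<subseteq> {..<p * q}" "i < length w"
  shows "wint p q w div (p * q) ^ i mod (p * q) = w ! (length w - 1 - i)"
  unfolding wint_def
  by (rule digit_sum_div_power_mod) (use assms in \<open>auto simp: subset_iff\<close>)

lemma wint_less:
  assumes "set w \<subseteq> {..<p * q}"
  shows "wint p q w < (p * q) ^ length w"
  unfolding wint_def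
  by (rule digit_sum_less_power) (use assms in \<open>auto simp: subset_iff\<close>)

lemma wint_eq_mod_power:
  assumes "length w = n"
    and "\<And>i. i < n \<Longrightarrow> w ! (n - 1 - i) = x div (p * q) ^ i mod (p * q)"
  shows "wint p q w = x mod (p * q) ^ n"
  unfolding wint_def mod_power_eq_digit_sum assms(1)
  by (rule sum.cong) (use assms(2) in auto)

lemma g_less:
  assumes "y < p * q"
  shows "g p q x y < p * q"
proof -
  have "0 < q"
    using assms by (cases q) auto
  then have "x mod q < q"
    by simp
  then have "x mod q \<le> q - 1"
    by linarith
  then have "(x mod q) * p + p \<le> p * q"
    using assms by (cases q) (auto simp: algebra_simps)
  moreover have "y div q < p"
    using assms by (simp add: less_mult_imp_div_less mult.commute)
  ultimately show ?thesis
    unfolding g_def by linarith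
qed

lemma g_eq_div_mod:
  assumes "y < p * q"
  shows "g p q x y = (x * (p * q) + y) div q mod (p * q)"
proof -
  have "0 < q"
    using assms by (cases q) auto
  then have "(x * (p * q) + y) div q = x * p + y div q"
    by (simp add: mult.assoc[symmetric] add.commute)
  moreover have "x * p mod (p * q) = (x mod q) * p"
    using mult_mod_left[of x q p] by (simp add: mult.commute)
  ultimately have "(x * (p * q) + y) div q mod (p * q) = g p q x y mod (p * q)"
    unfolding g_def by (metis mod_add_left_eq)
  then show ?thesis
    using g_less[OF assms] by simp
qed

lemma g_digits:
  assumes "0 < p" "0 < q"
  shows "g p q (x div (p * q) mod (p * q)) (x mod (p * q)) = x div q mod (p * q)"
proof -
  let ?b = "p * q"
  have "x div ?b mod ?b * ?b + x mod ?b = x mod (?b * ?b)"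
    by (simp add: mod_mult2_eq)
  moreover have "q * ?b dvd ?b * ?b"
    by simp
  ultimately show ?thesis
    using assms by (simp add: g_eq_div_mod mod_div_mod_eq)
qed

lemma f_digits:
  assumes "0 < p" "0 < q"
  shows "f p q (x div (p * q) ^ 2 mod (p * q)) (x div (p * q) mod (p * q)) (x mod (p * q))
    = x div q ^ 2 mod (p * q)"
proof -
  have "x div (p * q) div q = x div q div (p * q)"
    by (metis div_mult2_eq mult.commute)
  then show ?thesis
    using g_digits[OF assms, of "x div (p * q)"] g_digits[OF assms, of x]
      g_digits[OF assms, of "x div q"]
    by (simp add: f_def div_mult2_eq power2_eq_square)
qed

lemma length_F: "length (F p q w) = length w - 2"
  by (simp add: F_def)

lemma nth_F:
  assumes "i + 2 < length w"
  shows "F p q w ! i = f p q (w ! i) (w ! (i + 1)) (w ! (i + 2))"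
proof -
  have "i < length w - 2"
    using assms by simp
  then show ?thesis
    by (simp add: F_def)
qed

lemma set_F_subset:
  assumes "set w \<subseteq> {..<p * q}"
  shows "set (F p q w) \<subseteq> {..<p * q}"
proof
  fix z
  assume "z \<in> set (F p q w)"
  then obtain i where i: "i < length w - 2" and z: "z = F p q w ! i"
    by (auto simp: in_set_conv_nth length_F)
  have "w ! (i + 2) \<in> set w"
    using i by (intro nth_mem) simp
  then have "w ! (i + 2) < p * q"
    using assms by blast
  with i show "z \<in> {..<p * q}"
    unfolding z by (simp add: nth_F f_def g_less)
qed

lemma wint_F:
  assumes "0 < p" "0 < q" "set w \<subseteq> {..<p * q}"
  shows "wint p q (F p q w) = wint p q w div q ^ 2 mod (p * q) ^ (length w - 2)"
proof (rule wint_eq_mod_power)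
  show "length (F p q w) = length w - 2"
    by (rule length_F)
next
  fix i
  assume i: "i < length w - 2"
  let ?b = "p * q" and ?x = "wint p q w div (p * q) ^ i"
  have digit: "w ! (length w - 1 - (i + j)) = ?x div ?b ^ j mod ?b" if "j \<le> 2" for j
    using wint_div_power_mod[OF assms(3), of "i + j"] i that
    by (simp add: power_add div_mult2_eq)
  have "F p q w ! (length w - 2 - 1 - i)
      = f p q (w ! (length w - 1 - (i + 2))) (w ! (length w - 1 - (i + 1)))
          (w ! (length w - 1 - (i + 0)))"
    using i nth_F[of "length w - 3 - i" w p q]
    by (simp add: numeral_eq_Suc Suc_diff_Suc)
  also have "\<dots> = ?x div q ^ 2 mod ?b"
    using digit[of 0] digit[of 1] digit[of 2] f_digits[OF assms(1,2), of ?x] by simp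
  also have "\<dots> = wint p q w div q ^ 2 div ?b ^ i mod ?b"
    by (metis div_mult2_eq mult.commute)
  finally show "F p q w ! (length w - 2 - 1 - i) = wint p q w div q ^ 2 div ?b ^ i mod ?b" .
qed

lemma length_Fpow: "length (Fpow p q t w) = length w - 2 * t"
  by (induction t) (simp_all add: Fpow_def length_F)

lemma set_Fpow_subset:
  assumes "set w \<subseteq> {..<p * q}"
  shows "set (Fpow p q t w) \<subseteq> {..<p * q}"
  using assms by (induction t) (simp_all add: Fpow_def set_F_subset)

lemma wint_Fpow:
  assumes "0 < p" "0 < q" "set w \<subseteq> {..<p * q}" "2 * t \<le> length w"
  shows "wint p q (Fpow p q t w) = wint p q w div q ^ (2 * t) mod (p * q) ^ (length w - 2 * t)"
  using assms(4)
proof (induction t)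
  case 0
  show ?case
    using wint_less[OF assms(3)] by (simp add: Fpow_def)
next
  case (Suc t)
  let ?v = "Fpow p q t w" and ?l = "length w - 2 * t"
  have "q ^ 2 * (p * q) ^ (?l - 2) dvd (p * q) ^ ?l"
    using Suc.prems by (intro power_mult_power_diff_dvd) simp
  moreover have "Fpow p q (Suc t) w = F p q ?v"
    by (simp add: Fpow_def)
  ultimately have "wint p q (Fpow p q (Suc t) w)
      = wint p q w div q ^ (2 * t) div q ^ 2 mod (p * q) ^ (?l - 2)"
    using Suc assms(2)
    by (simp add: wint_F[OF assms(1,2) set_Fpow_subset[OF assms(3)]] length_Fpow mod_div_mod_eq)
  also have "\<dots> = wint p q w div q ^ (2 * Suc t) mod (p * q) ^ (length w - 2 * Suc t)"
    by (simp add: div_mult2_eq[symmetric] power_add[symmetric] mult.commute)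
  finally show ?case .
qed

theorem lemma10:
  fixes p q t k :: nat and w1 w2 :: "nat list"
  assumes "p \<ge> 2" "q \<ge> 2" "coprime p q" "t > 0" "k \<ge> 2 * t + 1"
    and "length w1 = k" "set w1 \<subseteq> {..<p * q}"
    and "length w2 = k" "set w2 \<subseteq> {..<p * q}"
  shows "(wint p q w1 < q ^ (2 * t) \<longrightarrow> wint p q (Fpow p q t w1) = 0)
    \<and> (wint p q w2 mod (p * q) ^ k = (wint p q w1 + q ^ (2 * t)) mod (p * q) ^ k \<longrightarrow>
        wint p q (Fpow p q t w2) mod (p * q) ^ (k - 2 * t)
          = (wint p q (Fpow p q t w1) + 1) mod (p * q) ^ (k - 2 * t))"
proof -
  let ?Q = "q ^ (2 * t)" and ?B = "(p * q) ^ (k - 2 * t)"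
  have pq: "0 < p" "0 < q"
    using assms(1,2) by auto
  have F1: "wint p q (Fpow p q t w1) = wint p q w1 div ?Q mod ?B"
    using wint_Fpow[OF pq assms(7)] assms(5,6) by simp
  have F2: "wint p q (Fpow p q t w2) = wint p q w2 div ?Q mod ?B"
    using wint_Fpow[OF pq assms(9)] assms(5,8) by simp
  have "?Q * ?B dvd (p * q) ^ k"
    using assms(5) by (intro power_mult_power_diff_dvd) simp
  moreover have "wint p q w2 = wint p q w2 mod (p * q) ^ k"
    using wint_less[OF assms(9)] assms(8) by simp
  ultimately have "wint p q w2 mod (p * q) ^ k = (wint p q w1 + ?Q) mod (p * q) ^ k \<Longrightarrow>
      wint p q (Fpow p q t w2) = (wint p q w1 div ?Q + 1) mod ?B"
    using pq by (simp add: F2 mod_div_mod_eq div_add_self2)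
  then show ?thesis
    by (simp add: F1 mod_Suc_eq)
qed

end
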